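(* Let $\lambda,\mu,\nu$ be partitions of the same integer with $\ell(\lambda)\le 4$ and $\ell(\mu),\ell(\nu)\le 2$. If $\nu_2<\lambda_3+\lambda_4$ or $\mu_2+\nu_2<\lambda_2+\lambda_3+2\lambda_4$, then the Kronecker coefficient $g_{\mu,\nu,\lambda}$ is zero. Equivalently, if $g_{\mu,\nu,\lambda}\ne0$ then $\lambda_2+\lambda_3+2\lambda_4\le\mu_2+\nu_2$ and $\lambda_3+\lambda_4\le\nu_2$.
   Context: Partitions are padded with zero parts. The Kronecker coefficient $g_{\mu,\nu,\lambda}$ is defined by $s_\lambda(x_1y_1,x_1y_2,x_2y_1,x_2y_2)=\sum_{\mu,\nu}g_{\mu,\nu,\lambda}\,s_\mu(x_1,x_2)s_\nu(y_1,y_2)$, with $s$ the Schur polynomials. *)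

theory Defs
  imports Complex_Main
begin

text \<open>Partitions are represented as lists of naturals, weakly decreasing,
  padded with zero parts to a fixed length (4 for lambda, 2 for mu and nu).\<close>

definition is_partition :: "nat list \<Rightarrow> bool" where
  "is_partition la \<longleftrightarrow> sorted (rev la)"

definition cells :: "nat list \<Rightarrow> (nat \<times> nat) set" where
  "cells la = {(i, j). i < length la \<and> j < la ! i}"

definition ssyt :: "nat list \<Rightarrow> nat \<Rightarrow> ((nat \<times> nat) \<Rightarrow> nat) set" where
  "ssyt la m = {T. (\<forall>c. c \<notin> cells la \<longrightarrow> T c = 0)
      \<and> (\<forall>c\<in>cells la. 1 \<le> T c \<and> T c \<le> m)
      \<and> (\<forall>i j. (i, Suc j) \<in> cells la \<longrightarrow> T (i, j) \<le> T (i, Suc j))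
      \<and> (\<forall>i j. (Suc i, j) \<in> cells la \<longrightarrow> T (i, j) < T (Suc i, j))}"

definition schur :: "nat list \<Rightarrow> nat \<Rightarrow> (nat \<Rightarrow> real) \<Rightarrow> real" where
  "schur la m z = (\<Sum>T\<in>ssyt la m. \<Prod>c\<in>cells la. z (T c))"

definition vars2 :: "real \<Rightarrow> real \<Rightarrow> nat \<Rightarrow> real" where
  "vars2 a b = (\<lambda>k. if k = 1 then a else b)"

definition vars4 :: "real \<Rightarrow> real \<Rightarrow> real \<Rightarrow> real \<Rightarrow> nat \<Rightarrow> real" where
  "vars4 a b c d = (\<lambda>k. if k = 1 then a else if k = 2 then b else if k = 3 then c else d)"

definition two_row_parts :: "nat \<Rightarrow> nat list set" where
  "two_row_parts n = {[a, b] | a b. b \<le> a \<and> a + b = n}"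

definition kron_expansion :: "nat list \<Rightarrow> (nat list \<Rightarrow> nat list \<Rightarrow> int) \<Rightarrow> bool" where
  "kron_expansion la c \<longleftrightarrow>
     (\<forall>x1 x2 y1 y2 :: real.
        schur la 4 (vars4 (x1*y1) (x1*y2) (x2*y1) (x2*y2)) =
        (\<Sum>mu\<in>two_row_parts (sum_list la). \<Sum>nu\<in>two_row_parts (sum_list la).
            of_int (c mu nu) * schur mu 2 (vars2 x1 x2) * schur nu 2 (vars2 y1 y2)))
     \<and> (\<forall>mu nu. mu \<notin> two_row_parts (sum_list la) \<or> nu \<notin> two_row_parts (sum_list la)
            \<longrightarrow> c mu nu = 0)"

definition kronecker :: "nat list \<Rightarrow> nat list \<Rightarrow> nat list \<Rightarrow> int" where
  "kronecker mu nu la = (THE c. kron_expansion la c) mu nu"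

end

theory Submission
  imports Defs "HOL-Combinatorics.Transposition"
begin

text \<open>Substituting x1 y1, x1 y2, x2 y1, x2 y2 into s_lambda, a tableau with entries in 1..4
  becomes a monomial whose x2-degree counts its entries 3 and 4 and whose y2-degree counts its
  entries 2 and 4.  Let N(j, k) be the number of tableaux with these degrees j and k.  Composites
  of Bender--Knuth involutions show that N is symmetric under j \<mapsto> n - j and under k \<mapsto> n - k;
  since s_(n-b,b)(x1, x2) is the sum of the monomials x1^(n-j) x2^j with b \<le> j \<le> n - b, comparing
  coefficients identifies g_((n-b,b),(n-d,d),lambda) with the mixed second difference of N at (b, d).
  Column strictness forces N(j, k) = 0 whenever k < lambda_3 + lambda_4 or
  j + k < lambda_2 + lambda_3 + 2 lambda_4, and this region is closed under decreasing j and k,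
  so the difference vanishes on it.\<close>

lemma is_partition_nth_Suc_le:
  "is_partition la \<Longrightarrow> Suc i < length la \<Longrightarrow> la ! Suc i \<le> la ! i"
  unfolding is_partition_def using sorted_rev_nth_mono by (metis le_SucI order_refl)

lemma cells_Sigma: "cells la = Sigma {..<length la} (\<lambda>i. {..<la ! i})"
  by (auto simp: cells_def)

lemma finite_cells: "finite (cells la)"
  by (simp add: cells_Sigma)

lemma card_cells: "card (cells la) = sum_list la"
  by (simp add: cells_Sigma sum_list_sum_nth atLeast0LessThan)

lemma cells_left: "(i, j) \<in> cells la \<Longrightarrow> j' \<le> j \<Longrightarrow> (i, j') \<in> cells la"
  unfolding cells_def by auto

lemma cells_above: "is_partition la \<Longrightarrow> (Suc i, j) \<in> cells la \<Longrightarrow> (i, j) \<in> cells la"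
  unfolding cells_def using is_partition_nth_Suc_le by fastforce

lemma ssyt_outside: "T \<in> ssyt la m \<Longrightarrow> (i, j) \<notin> cells la \<Longrightarrow> T (i, j) = 0"
  unfolding ssyt_def by blast

lemma ssyt_range: "T \<in> ssyt la m \<Longrightarrow> (i, j) \<in> cells la \<Longrightarrow> 1 \<le> T (i, j) \<and> T (i, j) \<le> m"
  unfolding ssyt_def by blast

lemma ssyt_row: "T \<in> ssyt la m \<Longrightarrow> (i, Suc j) \<in> cells la \<Longrightarrow> T (i, j) \<le> T (i, Suc j)"
  unfolding ssyt_def by blast

lemma ssyt_col: "T \<in> ssyt la m \<Longrightarrow> (Suc i, j) \<in> cells la \<Longrightarrow> T (i, j) < T (Suc i, j)"
  unfolding ssyt_def by blast

lemma ssyt_nonzero_in_cells: "T \<in> ssyt la m \<Longrightarrow> T (i, j) \<noteq> 0 \<Longrightarrow> (i, j) \<in> cells la"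
  using ssyt_outside by metis

lemma ssyt_row_mono:
  assumes "T \<in> ssyt la m" "(i, j') \<in> cells la" "j \<le> j'"
  shows "T (i, j) \<le> T (i, j')"
  using assms(2,3)
proof (induction j')
  case (Suc j')
  show ?case
  proof (cases "j = Suc j'")
    case False
    then have "T (i, j) \<le> T (i, j')"
      using Suc by (simp add: cells_left)
    also have "\<dots> \<le> T (i, Suc j')" using ssyt_row[OF assms(1) Suc.prems(1)] .
    finally show ?thesis .
  qed simp
qed simp

lemma finite_ssyt: "finite (ssyt la m)"
proof (rule finite_subset)
  show "ssyt la m \<subseteq> {f. \<forall>x. (x \<in> cells la \<longrightarrow> f x \<in> {..m}) \<and> (x \<notin> cells la \<longrightarrow> f x = 0)}"
    unfolding ssyt_def by auto
  show "finite {f. \<forall>x. (x \<in> cells la \<longrightarrow> f x \<in> {..m}) \<and> (x \<notin> cells la \<longrightarrow> f x = (0::nat))}"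
    by (rule finite_set_of_finite_funs) (simp_all add: finite_cells)
qed

definition content :: "nat list \<Rightarrow> (nat \<times> nat \<Rightarrow> nat) \<Rightarrow> nat \<Rightarrow> nat" where
  "content la T v = card {c \<in> cells la. T c = v}"

lemma content_le_size: "content la T v \<le> sum_list la"
  unfolding content_def card_cells[symmetric] by (rule card_mono[OF finite_cells]) auto

lemma content_add_content:
  assumes "a \<noteq> b"
  shows "content la T a + content la T b = card {c \<in> cells la. T c = a \<or> T c = b}"
proof -
  have "{c \<in> cells la. T c = a \<or> T c = b} = {c \<in> cells la. T c = a} \<union> {c \<in> cells la. T c = b}"
    by auto
  moreover have "finite {c \<in> cells la. T c = v}" for v
    by (rule finite_subset[OF _ finite_cells]) auto
  ultimately show ?thesis
    unfolding content_def using assms by (simp add: card_Un_disjoint disjoint_iff)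
qed

lemma content_total:
  assumes "T \<in> ssyt la 4"
  shows "content la T 1 + content la T 2 + content la T 3 + content la T 4 = sum_list la"
proof -
  let ?low = "{c \<in> cells la. T c = 1 \<or> T c = 2}" and ?high = "{c \<in> cells la. T c = 3 \<or> T c = 4}"
  have "T c \<in> {1, 2, 3, 4}" if "c \<in> cells la" for c
    using ssyt_range[OF assms, of "fst c" "snd c"] that by auto
  then have cells_eq: "?low \<union> ?high = cells la" by auto
  have "finite ?low" "finite ?high"
    by (rule finite_subset[OF _ finite_cells], blast)+
  moreover have "?low \<inter> ?high = {}" by auto
  ultimately have "card (?low \<union> ?high) = card ?low + card ?high"
    by (rule card_Un_disjoint)
  moreover have "card (?low \<union> ?high) = sum_list la"
    by (simp only: cells_eq card_cells)
  moreover have "content la T 1 + content la T 2 = card ?low"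
    by (rule content_add_content) simp
  moreover have "content la T 3 + content la T 4 = card ?high"
    by (rule content_add_content) simp
  ultimately show ?thesis by linarith
qed

section \<open>Bender--Knuth involutions\<close>

definition rank :: "nat set \<Rightarrow> nat \<Rightarrow> nat" where
  "rank F j = card {j' \<in> F. j' < j}"

lemma rank_strict_mono:
  assumes "finite F" "j1 \<in> F" "j1 < j2"
  shows "rank F j1 < rank F j2"
proof -
  have "{j' \<in> F. j' < j1} \<subset> {j' \<in> F. j' < j2}" using assms by auto
  then show ?thesis unfolding rank_def using assms(1) by (simp add: psubset_card_mono)
qed

lemma rank_less_card:
  assumes "finite F" "j \<in> F"
  shows "rank F j < card F"
proof -
  have "{j' \<in> F. j' < j} \<subset> F" using assms by auto
  then show ?thesis unfolding rank_def using assms by (simp add: psubset_card_mono)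
qed

lemma inj_on_rank: "finite F \<Longrightarrow> inj_on (rank F) F"
  unfolding inj_on_def by (metis less_irrefl linorder_neqE_nat rank_strict_mono)

lemma rank_image:
  assumes "finite F"
  shows "rank F ` F = {..<card F}"
proof (rule card_subset_eq)
  show "rank F ` F \<subseteq> {..<card F}" using rank_less_card[OF assms] by auto
  show "card (rank F ` F) = card {..<card F}"
    using card_image[OF inj_on_rank[OF assms]] by simp
qed simp

lemma card_rank_less:
  assumes "finite F"
  shows "card {j \<in> F. rank F j < b} = min b (card F)"
proof -
  have "rank F ` {j \<in> F. rank F j < b} = {r \<in> rank F ` F. r < b}" by auto
  also have "\<dots> = {..<min b (card F)}" using rank_image[OF assms] by auto
  finally have "card (rank F ` {j \<in> F. rank F j < b}) = min b (card F)" by simp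
  moreover have "inj_on (rank F) {j \<in> F. rank F j < b}"
    using inj_on_rank[OF assms] by (rule inj_on_subset) auto
  ultimately show ?thesis by (simp add: card_image)
qed

lemma rank_less_card_iff:
  assumes "finite F" "K \<subseteq> F" "\<And>j j'. j \<in> K \<Longrightarrow> j' \<in> F \<Longrightarrow> j' < j \<Longrightarrow> j' \<in> K" "j \<in> F"
  shows "rank F j < card K \<longleftrightarrow> j \<in> K"
proof
  assume "j \<in> K"
  then have "{j' \<in> F. j' < j} \<subset> K" using assms by auto
  then show "rank F j < card K"
    unfolding rank_def using assms by (meson finite_subset psubset_card_mono)
next
  assume r: "rank F j < card K"
  show "j \<in> K"
  proof (rule ccontr)
    assume "j \<notin> K"
    have "K \<subseteq> {j' \<in> F. j' < j}"
    proof
      fix x assume x: "x \<in> K"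
      then have "x < j"
        using assms(3)[OF x assms(4)] \<open>j \<notin> K\<close> by (metis linorder_neqE_nat)
      then show "x \<in> {j' \<in> F. j' < j}" using x assms(2) by auto
    qed
    then have "card K \<le> rank F j" unfolding rank_def using assms(1) by (simp add: card_mono)
    then show False using r by simp
  qed
qed

lemma card_Collect_cells_rows:
  assumes "\<And>i j. P i j \<Longrightarrow> (i, j) \<in> cells la"
  shows "card {(i, j). P i j} = (\<Sum>i<length la. card {j. P i j})"
proof -
  have "{(i, j). P i j} = Sigma {..<length la} (\<lambda>i. {j. P i j})"
    using assms by (auto simp: cells_def)
  moreover have "finite {j. P i j}" for i
    by (rule finite_subset[of _ "{..<la ! i}"]) (use assms in \<open>auto simp: cells_def\<close>)
  ultimately show ?thesis by simp
qed

text \<open>An entry k or k + 1 of a tableau is free unless the other of the two values sits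
  directly below resp. above it.  In each row the free entries occupy consecutive cells, reading
  k ... k (k+1) ... (k+1); the Bender--Knuth involution refills this block with as many entries k
  as it had entries k + 1.\<close>

definition bk_free :: "(nat \<times> nat \<Rightarrow> nat) \<Rightarrow> nat \<Rightarrow> nat \<Rightarrow> nat \<Rightarrow> bool" where
  "bk_free T k i j \<longleftrightarrow>
     (T (i, j) = k \<and> T (Suc i, j) \<noteq> Suc k) \<or> (T (i, j) = Suc k \<and> \<not> (0 < i \<and> T (i - 1, j) = k))"

definition bk_free_upper :: "(nat \<times> nat \<Rightarrow> nat) \<Rightarrow> nat \<Rightarrow> nat \<Rightarrow> nat" where
  "bk_free_upper T k i = card {j. bk_free T k i j \<and> T (i, j) = Suc k}"

definition bender_knuth :: "nat \<Rightarrow> (nat \<times> nat \<Rightarrow> nat) \<Rightarrow> nat \<times> nat \<Rightarrow> nat" where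
  "bender_knuth k T = (\<lambda>(i, j).
     if bk_free T k i j
     then (if rank {j. bk_free T k i j} j < bk_free_upper T k i then k else Suc k)
     else T (i, j))"

lemma bender_knuth_apply:
  "bender_knuth k T (i, j) =
     (if bk_free T k i j
      then (if rank {j. bk_free T k i j} j < bk_free_upper T k i then k else Suc k)
      else T (i, j))"
  by (simp add: bender_knuth_def)

locale bender_knuth_setting =
  fixes la :: "nat list" and m k :: nat and T :: "nat \<times> nat \<Rightarrow> nat"
  assumes partition: "is_partition la" and tableau: "T \<in> ssyt la m"
    and k_pos: "1 \<le> k" and k_less: "Suc k \<le> m"
begin

abbreviation "row_free i \<equiv> {j. bk_free T k i j}"
abbreviation "T' \<equiv> bender_knuth k T"

lemma free_value: "bk_free T k i j \<Longrightarrow> T (i, j) = k \<or> T (i, j) = Suc k"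
  unfolding bk_free_def by auto

lemma free_in_cells: "bk_free T k i j \<Longrightarrow> (i, j) \<in> cells la"
  using free_value ssyt_nonzero_in_cells[OF tableau] k_pos by fastforce

lemma finite_row_free: "finite (row_free i)"
  by (rule finite_subset[of _ "{..<la ! i}"]) (auto dest: free_in_cells simp: cells_def)

lemma free_below: "bk_free T k i j \<Longrightarrow> T (Suc i, j) \<noteq> k \<and> T (Suc i, j) \<noteq> Suc k"
proof (cases "(Suc i, j) \<in> cells la")
  case True
  then show "bk_free T k i j \<Longrightarrow> ?thesis"
    using ssyt_col[OF tableau True] unfolding bk_free_def by auto
next
  case False
  then show ?thesis using ssyt_outside[OF tableau False] k_pos by simp
qed

lemma free_above: "bk_free T k i j \<Longrightarrow> 0 < i \<Longrightarrow> T (i - 1, j) < k"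
proof -
  assume free: "bk_free T k i j" and i: "0 < i"
  have "(Suc (i - 1), j) \<in> cells la" using free_in_cells[OF free] i by simp
  from ssyt_col[OF tableau this] show ?thesis
    using free i unfolding bk_free_def by auto
qed

lemma not_free_below_free: "bk_free T k i j \<Longrightarrow> \<not> bk_free T k (Suc i) j"
  using free_below free_value by blast

lemma le_left_of_free:
  assumes free: "bk_free T k i j2" and "j1 < j2" and not_free: "\<not> bk_free T k i j1"
  shows "T (i, j1) \<le> k"
proof (rule ccontr)
  assume "\<not> T (i, j1) \<le> k"
  have c2: "(i, j2) \<in> cells la" using free_in_cells[OF free] .
  have "T (i, j1) \<le> T (i, j2)" using ssyt_row_mono[OF tableau c2] \<open>j1 < j2\<close> by simp
  then have upper: "T (i, j1) = Suc k" "T (i, j2) = Suc k"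
    using free_value[OF free] \<open>\<not> T (i, j1) \<le> k\<close> by auto
  then have i: "0 < i" and above: "T (i - 1, j1) = k"
    using not_free unfolding bk_free_def by auto
  have c2': "(Suc (i - 1), j2) \<in> cells la" using c2 i by simp
  have "T (i - 1, j1) \<le> T (i - 1, j2)"
    using ssyt_row_mono[OF tableau cells_above[OF partition c2']] \<open>j1 < j2\<close> by simp
  moreover have "T (i - 1, j2) < T (Suc (i - 1), j2)" using ssyt_col[OF tableau c2'] .
  ultimately have "T (i - 1, j2) = k" using above upper i by simp
  then show False using free upper i unfolding bk_free_def by auto
qed

lemma ge_right_of_free:
  assumes free: "bk_free T k i j2" and "j2 < j1" and c1: "(i, j1) \<in> cells la"
    and not_free: "\<not> bk_free T k i j1"
  shows "Suc k \<le> T (i, j1)"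
proof (rule ccontr)
  assume "\<not> Suc k \<le> T (i, j1)"
  have "T (i, j2) \<le> T (i, j1)" using ssyt_row_mono[OF tableau c1] \<open>j2 < j1\<close> by simp
  then have lower: "T (i, j1) = k" "T (i, j2) = k"
    using free_value[OF free] \<open>\<not> Suc k \<le> T (i, j1)\<close> by auto
  then have below: "T (Suc i, j1) = Suc k" using not_free unfolding bk_free_def by auto
  then have cb: "(Suc i, j1) \<in> cells la" using ssyt_nonzero_in_cells[OF tableau] by simp
  have "T (Suc i, j2) \<le> T (Suc i, j1)" using ssyt_row_mono[OF tableau cb] \<open>j2 < j1\<close> by simp
  moreover have "T (i, j2) < T (Suc i, j2)"
    using ssyt_col[OF tableau cells_left[OF cb]] \<open>j2 < j1\<close> by simp
  ultimately have "T (Suc i, j2) = Suc k" using below lower by simp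
  then show False using free lower unfolding bk_free_def by auto
qed

lemma free_upper_right:
  "bk_free T k i j1 \<Longrightarrow> bk_free T k i j2 \<Longrightarrow> j1 < j2 \<Longrightarrow> T (i, j1) = Suc k \<Longrightarrow> T (i, j2) = Suc k"
  using ssyt_row_mono[OF tableau free_in_cells, of i j2 j1] free_value[of i j2] by fastforce

lemma T'_row_mono:
  assumes c: "(i, Suc j) \<in> cells la"
  shows "T' (i, j) \<le> T' (i, Suc j)"
proof (cases "bk_free T k i j")
  case free: True
  show ?thesis
  proof (cases "bk_free T k i (Suc j)")
    case True
    have "rank (row_free i) j < rank (row_free i) (Suc j)"
      using rank_strict_mono[OF finite_row_free] free by simp
    then show ?thesis using free True by (auto simp: bender_knuth_apply)
  next
    case False
    have "Suc k \<le> T (i, Suc j)" using ge_right_of_free[OF free _ c False] by simp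
    then show ?thesis using free False by (auto simp: bender_knuth_apply)
  qed
next
  case not_free: False
  show ?thesis
  proof (cases "bk_free T k i (Suc j)")
    case True
    have "T (i, j) \<le> k" using le_left_of_free[OF True _ not_free] by simp
    then show ?thesis using not_free True by (auto simp: bender_knuth_apply)
  next
    case False
    then show ?thesis using not_free ssyt_row[OF tableau c] by (auto simp: bender_knuth_apply)
  qed
qed

lemma T'_col_strict:
  assumes c: "(Suc i, j) \<in> cells la"
  shows "T' (i, j) < T' (Suc i, j)"
proof (cases "bk_free T k i j")
  case free: True
  have "T (i, j) < T (Suc i, j)" using ssyt_col[OF tableau c] .
  then have "Suc k < T (Suc i, j)" using free_below[OF free] free_value[OF free] by auto
  then show ?thesis using free not_free_below_free[OF free] by (auto simp: bender_knuth_apply)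
next
  case not_free: False
  show ?thesis
  proof (cases "bk_free T k (Suc i) j")
    case True
    have "T (i, j) < k" using free_above[OF True] by simp
    then show ?thesis using not_free True by (auto simp: bender_knuth_apply)
  next
    case False
    then show ?thesis using not_free ssyt_col[OF tableau c] by (auto simp: bender_knuth_apply)
  qed
qed

lemma ssyt_T': "T' \<in> ssyt la m"
  unfolding ssyt_def
proof (intro CollectI conjI allI impI ballI)
  fix c assume "c \<notin> cells la"
  then show "T' c = 0"
    using free_in_cells ssyt_outside[OF tableau] by (cases c) (auto simp: bender_knuth_apply)
next
  fix c assume c: "c \<in> cells la"
  show "1 \<le> T' c" using ssyt_range[OF tableau] c k_pos by (cases c) (auto simp: bender_knuth_apply)
  show "T' c \<le> m" using ssyt_range[OF tableau] c k_less by (cases c) (auto simp: bender_knuth_apply)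
next
  fix i j
  show "(i, Suc j) \<in> cells la \<Longrightarrow> T' (i, j) \<le> T' (i, Suc j)" by (rule T'_row_mono)
  show "(Suc i, j) \<in> cells la \<Longrightarrow> T' (i, j) < T' (Suc i, j)" by (rule T'_col_strict)
qed

lemma free_T'_iff: "bk_free T' k i j \<longleftrightarrow> bk_free T k i j"
proof (cases "bk_free T k i j")
  case free: True
  have below: "T' (Suc i, j) = T (Suc i, j)"
    using not_free_below_free[OF free] by (simp add: bender_knuth_apply)
  have above: "T' (i - 1, j) = T (i - 1, j)" if "0 < i"
  proof -
    have "\<not> bk_free T k (i - 1) j" using not_free_below_free[of "i - 1" j] free that by auto
    then show ?thesis by (simp add: bender_knuth_apply)
  qed
  have "T' (i, j) = k \<or> T' (i, j) = Suc k" using free by (simp add: bender_knuth_apply)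
  then have "bk_free T' k i j"
    using free_below[OF free] free_above[OF free] below above unfolding bk_free_def[of T'] by auto
  then show ?thesis using free by simp
next
  case not_free: False
  have "\<not> bk_free T' k i j"
  proof (cases "T (i, j) = k")
    case True
    then have below: "T (Suc i, j) = Suc k" using not_free unfolding bk_free_def by auto
    then have "\<not> bk_free T k (Suc i) j" using True unfolding bk_free_def by auto
    then have "T' (Suc i, j) = Suc k" using below by (simp add: bender_knuth_apply)
    then show ?thesis
      using not_free True unfolding bk_free_def[of T'] by (auto simp: bender_knuth_apply)
  next
    case False
    show ?thesis
    proof (cases "T (i, j) = Suc k")
      case True
      then have i: "0 < i" and above: "T (i - 1, j) = k"
        using not_free unfolding bk_free_def by auto
      then have "\<not> bk_free T k (i - 1) j" using True unfolding bk_free_def by auto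
      then have "T' (i - 1, j) = k" using above by (simp add: bender_knuth_apply)
      then show ?thesis
        using not_free True i unfolding bk_free_def[of T'] by (auto simp: bender_knuth_apply)
    next
      case False
      then show ?thesis
        using not_free \<open>T (i, j) \<noteq> k\<close> unfolding bk_free_def[of T']
        by (auto simp: bender_knuth_apply)
    qed
  qed
  then show ?thesis using not_free by simp
qed

lemma free_upper_le: "bk_free_upper T k i \<le> card (row_free i)"
  unfolding bk_free_upper_def by (rule card_mono[OF finite_row_free]) auto

lemma card_row_free:
  "card (row_free i) = card {j. bk_free T k i j \<and> T (i, j) = k} + bk_free_upper T k i"
proof -
  have "row_free i = {j. bk_free T k i j \<and> T (i, j) = k} \<union> {j. bk_free T k i j \<and> T (i, j) = Suc k}"
    using free_value by auto
  moreover have "{j. bk_free T k i j \<and> T (i, j) = k} \<inter> {j. bk_free T k i j \<and> T (i, j) = Suc k} = {}"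
    by auto
  ultimately show ?thesis
    unfolding bk_free_upper_def using finite_row_free by (metis card_Un_disjoint finite_Un)
qed

lemma free_upper_T': "bk_free_upper T' k i = card {j. bk_free T k i j \<and> T (i, j) = k}"
proof -
  let ?S = "{j \<in> row_free i. rank (row_free i) j < bk_free_upper T k i}"
  have "{j. bk_free T' k i j \<and> T' (i, j) = Suc k} = row_free i - ?S"
    using free_T'_iff by (auto simp: bender_knuth_apply)
  then have "bk_free_upper T' k i = card (row_free i - ?S)"
    by (simp only: bk_free_upper_def[of T'])
  also have "\<dots> = card (row_free i) - card ?S"
    by (rule card_Diff_subset) (use finite_row_free in auto)
  also have "\<dots> = card (row_free i) - bk_free_upper T k i"
    using card_rank_less[OF finite_row_free] free_upper_le by simp
  finally show ?thesis using card_row_free by simp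
qed

lemma bender_knuth_T': "bender_knuth k T' = T"
proof (intro ext, clarify)
  fix i j
  show "bender_knuth k T' (i, j) = T (i, j)"
  proof (cases "bk_free T k i j")
    case free: True
    let ?K = "{j. bk_free T k i j \<and> T (i, j) = k}"
    have "rank (row_free i) j < card ?K \<longleftrightarrow> j \<in> ?K"
    proof (rule rank_less_card_iff[OF finite_row_free])
      fix a b assume "a \<in> ?K" "b \<in> row_free i" "b < a"
      then show "b \<in> ?K" using free_upper_right[of i b a] free_value[of i b] by auto
    qed (use free in auto)
    moreover have "{j. bk_free T' k i j} = row_free i" using free_T'_iff by simp
    ultimately show ?thesis
      using free free_value[OF free]
      by (simp only: bender_knuth_apply[of k T'] free_T'_iff free_upper_T') auto
  next
    case False
    then show ?thesis by (simp add: bender_knuth_apply[of k T'] free_T'_iff bender_knuth_apply)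
  qed
qed

lemma content_T'_other:
  assumes "v \<noteq> k" "v \<noteq> Suc k"
  shows "content la T' v = content la T v"
proof -
  have "T' (i, j) = v \<longleftrightarrow> T (i, j) = v" for i j
    using assms free_value[of i j] by (auto simp: bender_knuth_apply)
  then have "{c \<in> cells la. T' c = v} = {c \<in> cells la. T c = v}" by auto
  then show ?thesis by (simp add: content_def)
qed

lemma card_unfree_eq:
  "card {(i, j). (i, j) \<in> cells la \<and> \<not> bk_free T k i j \<and> T (i, j) = k}
    = card {(i, j). (i, j) \<in> cells la \<and> \<not> bk_free T k i j \<and> T (i, j) = Suc k}"
proof -
  define PL where "PL = {(i, j). (i, j) \<in> cells la \<and> \<not> bk_free T k i j \<and> T (i, j) = k}"
  define PH where "PH = {(i, j). (i, j) \<in> cells la \<and> \<not> bk_free T k i j \<and> T (i, j) = Suc k}"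
  have "(\<lambda>(i, j). (Suc i, j)) ` PL = PH"
  proof
    show "(\<lambda>(i, j). (Suc i, j)) ` PL \<subseteq> PH"
    proof clarify
      fix i j assume "(i, j) \<in> PL"
      then have "T (i, j) = k" "\<not> bk_free T k i j" by (auto simp: PL_def)
      then have "T (Suc i, j) = Suc k" "\<not> bk_free T k (Suc i) j" unfolding bk_free_def by auto
      then show "(Suc i, j) \<in> PH" using ssyt_nonzero_in_cells[OF tableau] by (simp add: PH_def)
    qed
    show "PH \<subseteq> (\<lambda>(i, j). (Suc i, j)) ` PL"
    proof clarify
      fix i j assume "(i, j) \<in> PH"
      then have upper: "T (i, j) = Suc k" "\<not> bk_free T k i j" by (auto simp: PH_def)
      then have i: "0 < i" and above: "T (i - 1, j) = k" unfolding bk_free_def by auto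
      then have "(i - 1, j) \<in> cells la" using ssyt_nonzero_in_cells[OF tableau] k_pos by simp
      moreover have "\<not> bk_free T k (i - 1) j" using upper above i unfolding bk_free_def by auto
      ultimately have "(i - 1, j) \<in> PL" using above by (simp add: PL_def)
      moreover have "(i, j) = (\<lambda>(i, j). (Suc i, j)) (i - 1, j)" using i by simp
      ultimately show "(i, j) \<in> (\<lambda>(i, j). (Suc i, j)) ` PL" by blast
    qed
  qed
  moreover have "inj_on (\<lambda>(i, j). (Suc i, j)) PL" by (auto simp: inj_on_def)
  ultimately have "card PL = card PH" by (metis card_image)
  then show ?thesis unfolding PL_def PH_def .
qed

lemma card_free_lowered_eq:
  "card {(i, j). bk_free T k i j \<and> rank (row_free i) j < bk_free_upper T k i}
    = card {(i, j). bk_free T k i j \<and> T (i, j) = Suc k}"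
proof -
  have "card {(i, j). bk_free T k i j \<and> rank (row_free i) j < bk_free_upper T k i}
      = (\<Sum>i<length la. card {j. bk_free T k i j \<and> rank (row_free i) j < bk_free_upper T k i})"
    by (rule card_Collect_cells_rows) (auto intro: free_in_cells)
  also have "\<dots> = (\<Sum>i<length la. bk_free_upper T k i)"
    using card_rank_less[OF finite_row_free] free_upper_le by (simp add: min_absorb1)
  also have "\<dots> = card {(i, j). bk_free T k i j \<and> T (i, j) = Suc k}"
    unfolding bk_free_upper_def by (rule card_Collect_cells_rows[symmetric]) (auto intro: free_in_cells)
  finally show ?thesis .
qed

lemma content_T'_lower: "content la T' k = content la T (Suc k)"
proof -
  define PL where "PL = {(i, j). (i, j) \<in> cells la \<and> \<not> bk_free T k i j \<and> T (i, j) = k}"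
  define PH where "PH = {(i, j). (i, j) \<in> cells la \<and> \<not> bk_free T k i j \<and> T (i, j) = Suc k}"
  define FK where "FK = {(i, j). bk_free T k i j \<and> rank (row_free i) j < bk_free_upper T k i}"
  define FH where "FH = {(i, j). bk_free T k i j \<and> T (i, j) = Suc k}"
  have subsets: "PL \<subseteq> cells la" "PH \<subseteq> cells la" "FK \<subseteq> cells la" "FH \<subseteq> cells la"
    unfolding PL_def PH_def FK_def FH_def using free_in_cells by auto
  have "{c \<in> cells la. T' c = k} = PL \<union> FK"
    unfolding PL_def FK_def using free_in_cells by (auto simp: bender_knuth_apply split: if_splits)
  moreover have "PL \<inter> FK = {}" unfolding PL_def FK_def by auto
  ultimately have lower: "content la T' k = card PL + card FK"
    unfolding content_def using subsets by (simp add: card_Un_disjoint finite_subset[OF _ finite_cells])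
  have "{c \<in> cells la. T c = Suc k} = PH \<union> FH"
    unfolding PH_def FH_def using free_in_cells free_value by auto
  moreover have "PH \<inter> FH = {}" unfolding PH_def FH_def by auto
  ultimately have upper: "content la T (Suc k) = card PH + card FH"
    unfolding content_def using subsets by (simp add: card_Un_disjoint finite_subset[OF _ finite_cells])
  have "card PL = card PH" unfolding PL_def PH_def by (rule card_unfree_eq)
  moreover have "card FK = card FH" unfolding FK_def FH_def by (rule card_free_lowered_eq)
  ultimately show ?thesis using lower upper by simp
qed

end

lemma
  assumes "is_partition la" "T \<in> ssyt la m" "1 \<le> k" "Suc k \<le> m"
  shows ssyt_bender_knuth: "bender_knuth k T \<in> ssyt la m"
    and bender_knuth_bender_knuth: "bender_knuth k (bender_knuth k T) = T"
    and content_bender_knuth: "content la (bender_knuth k T) v = content la T (transpose k (Suc k) v)"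
proof -
  interpret bender_knuth_setting la m k T using assms by unfold_locales
  show "bender_knuth k T \<in> ssyt la m" by (rule ssyt_T')
  show "bender_knuth k (bender_knuth k T) = T" by (rule bender_knuth_T')
  interpret T': bender_knuth_setting la m k "bender_knuth k T" using assms ssyt_T' by unfold_locales
  consider "v = k" | "v = Suc k" | "v \<noteq> k" "v \<noteq> Suc k" by blast
  then show "content la (bender_knuth k T) v = content la T (transpose k (Suc k) v)"
  proof cases
    case 1
    then show ?thesis using content_T'_lower by simp
  next
    case 2
    then show ?thesis using T'.content_T'_lower bender_knuth_T' by simp
  next
    case 3
    then show ?thesis using content_T'_other by simp
  qed
qed

lemma bij_betw_bender_knuth:
  assumes "is_partition la" "1 \<le> k" "Suc k \<le> m"
  shows "bij_betw (bender_knuth k) (ssyt la m) (ssyt la m)"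
  by (rule bij_betw_byWitness[where f' = "bender_knuth k"],
      (use bender_knuth_bender_knuth[OF assms(1) _ assms(2,3)]
        ssyt_bender_knuth[OF assms(1) _ assms(2,3)] in blast)+)

text \<open>Under the substitution (x1 y1, x1 y2, x2 y1, x2 y2) for the four variables, each entry
  3 or 4 of a tableau contributes a factor x2 and each entry 2 or 4 a factor y2.\<close>

definition deg_x2 :: "nat list \<Rightarrow> (nat \<times> nat \<Rightarrow> nat) \<Rightarrow> nat" where
  "deg_x2 la T = content la T 3 + content la T 4"

definition deg_y2 :: "nat list \<Rightarrow> (nat \<times> nat \<Rightarrow> nat) \<Rightarrow> nat" where
  "deg_y2 la T = content la T 2 + content la T 4"

definition weight_count :: "nat list \<Rightarrow> nat \<Rightarrow> nat \<Rightarrow> nat" where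
  "weight_count la j k = card {T \<in> ssyt la 4. deg_x2 la T = j \<and> deg_y2 la T = k}"

lemma deg_x2_le: "deg_x2 la T \<le> sum_list la" if "T \<in> ssyt la 4"
  using content_total[OF that] by (simp add: deg_x2_def)

lemma deg_y2_le: "deg_y2 la T \<le> sum_list la" if "T \<in> ssyt la 4"
  using content_total[OF that] by (simp add: deg_y2_def)

lemma card_Collect_bij_betw_eq:
  assumes bij: "bij_betw f S S" and PQ: "\<And>x. x \<in> S \<Longrightarrow> P (f x) \<longleftrightarrow> Q x"
  shows "card {x \<in> S. P x} = card {x \<in> S. Q x}"
proof -
  have "bij_betw f {x \<in> S. Q x} {x \<in> S. P x}"
  proof (rule bij_betw_subset[OF bij])
    show "f ` {x \<in> S. Q x} = {x \<in> S. P x}"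
    proof (intro equalityI subsetI)
      fix y assume "y \<in> f ` {x \<in> S. Q x}"
      then obtain x where "x \<in> S" "Q x" "y = f x" by blast
      then show "y \<in> {x \<in> S. P x}" using PQ bij_betw_apply[OF bij] by blast
    next
      fix y assume y: "y \<in> {x \<in> S. P x}"
      then obtain x where "x \<in> S" "y = f x" using bij_betw_imp_surj_on[OF bij] by blast
      then show "y \<in> f ` {x \<in> S. Q x}" using PQ y by blast
    qed
  qed blast
  then show ?thesis by (rule bij_betw_same_card[symmetric])
qed

text \<open>The composite Bender--Knuth involutions below permute the entries as 1 <-> 3, 2 <-> 4
  resp. 1 <-> 2, 3 <-> 4.\<close>

lemma weight_count_reflect_x2:
  assumes "is_partition la" "j \<le> sum_list la"
  shows "weight_count la (sum_list la - j) k = weight_count la j k"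
proof -
  let ?f = "bender_knuth 2 \<circ> bender_knuth 1 \<circ> bender_knuth 3 \<circ> bender_knuth 2"
  have bk: "bij_betw (bender_knuth k) (ssyt la 4) (ssyt la 4)" if "k \<in> {1, 2, 3}" for k
    using bij_betw_bender_knuth[OF assms(1)] that by auto
  have bij: "bij_betw ?f (ssyt la 4) (ssyt la 4)"
    using bij_betw_trans[OF bij_betw_trans[OF bij_betw_trans[OF bk[of 2] bk[of 3]] bk[of 1]] bk[of 2]]
    by (simp add: comp_assoc)
  have "content la (?f T) 2 = content la T 4" "content la (?f T) 3 = content la T 1"
    "content la (?f T) 4 = content la T 2" if "T \<in> ssyt la 4" for T
    using that assms(1)
    by (simp_all add: ssyt_bender_knuth content_bender_knuth[where m = 4] transpose_def)
  then have "deg_x2 la (?f T) = sum_list la - deg_x2 la T" "deg_y2 la (?f T) = deg_y2 la T"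
    if "T \<in> ssyt la 4" for T
    using that content_total[OF that] by (simp_all add: deg_x2_def deg_y2_def)
  moreover have "sum_list la - deg_x2 la T = sum_list la - j \<longleftrightarrow> deg_x2 la T = j"
    if "T \<in> ssyt la 4" for T
    using deg_x2_le[OF that] assms(2) by linarith
  ultimately show ?thesis
    unfolding weight_count_def by (intro card_Collect_bij_betw_eq[OF bij]) auto
qed

lemma weight_count_reflect_y2:
  assumes "is_partition la" "k \<le> sum_list la"
  shows "weight_count la j (sum_list la - k) = weight_count la j k"
proof -
  let ?f = "bender_knuth 1 \<circ> bender_knuth 3"
  have bij: "bij_betw ?f (ssyt la 4) (ssyt la 4)"
    using bij_betw_trans[OF bij_betw_bender_knuth[OF assms(1)] bij_betw_bender_knuth[OF assms(1)]]
    by simp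
  have "content la (?f T) 2 = content la T 1" "content la (?f T) 3 = content la T 4"
    "content la (?f T) 4 = content la T 3" if "T \<in> ssyt la 4" for T
    using that assms(1)
    by (simp_all add: ssyt_bender_knuth content_bender_knuth[where m = 4] transpose_def)
  then have "deg_x2 la (?f T) = deg_x2 la T" "deg_y2 la (?f T) = sum_list la - deg_y2 la T"
    if "T \<in> ssyt la 4" for T
    using that content_total[OF that] by (simp_all add: deg_x2_def deg_y2_def)
  moreover have "sum_list la - deg_y2 la T = sum_list la - k \<longleftrightarrow> deg_y2 la T = k"
    if "T \<in> ssyt la 4" for T
    using deg_y2_le[OF that] assms(2) by linarith
  ultimately show ?thesis
    unfolding weight_count_def by (intro card_Collect_bij_betw_eq[OF bij]) auto
qed

section \<open>Column bounds\<close>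

lemma sum_indicator_less: "a \<le> b \<Longrightarrow> (\<Sum>j<b. if j < a then 1 else 0 :: nat) = a"
  by (simp add: sum.If_cases[OF finite_lessThan] Int_absorb1 subset_eq)

context
  fixes la :: "nat list" and T :: "nat \<times> nat \<Rightarrow> nat"
  assumes length: "length la = 4" and partition: "is_partition la" and tableau: "T \<in> ssyt la 4"
begin

lemma parts_mono: "la ! 1 \<le> la ! 0" "la ! 2 \<le> la ! 1" "la ! 3 \<le> la ! 2"
  using is_partition_nth_Suc_le[OF partition, of 0] is_partition_nth_Suc_le[OF partition, of 1]
    is_partition_nth_Suc_le[OF partition, of 2] length
  by (simp_all add: numeral_eq_Suc)

lemma card_cells_by_columns:
  "card {c \<in> cells la. P c} = (\<Sum>j<la ! 0. \<Sum>i<4. if j < la ! i \<and> P (i, j) then 1 else 0)"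
proof -
  let ?B = "{..<4::nat} \<times> {..<la ! 0}"
  have "la ! i \<le> la ! 0" if "i < 4" for i
    using that parts_mono by (auto simp: less_Suc_eq numeral_eq_Suc)
  then have "{c \<in> cells la. P c} = {c \<in> ?B. case c of (i, j) \<Rightarrow> j < la ! i \<and> P (i, j)}"
    using length by (fastforce simp: cells_def)
  then have "card {c \<in> cells la. P c}
      = (\<Sum>c\<in>?B. if case c of (i, j) \<Rightarrow> j < la ! i \<and> P (i, j) then 1 else 0)"
    by (simp add: sum.inter_filter[symmetric])
  also have "\<dots> = (\<Sum>i<4. \<Sum>j<la ! 0. if j < la ! i \<and> P (i, j) then 1 else 0)"
    by (subst sum.cartesian_product) (simp add: split_def)
  also have "\<dots> = (\<Sum>j<la ! 0. \<Sum>i<4. if j < la ! i \<and> P (i, j) then 1 else 0)"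
    by (rule sum.swap)
  finally show ?thesis .
qed

lemma sum_four: "(\<Sum>i<(4::nat). f i) = f 0 + f 1 + f 2 + (f 3 :: nat)"
  by (simp add: numeral_eq_Suc lessThan_Suc)

lemma column_entries:
  shows "j < la ! 0 \<Longrightarrow> 1 \<le> T (0, j)"
    and "j < la ! 1 \<Longrightarrow> T (0, j) < T (1, j)"
    and "j < la ! 2 \<Longrightarrow> T (1, j) < T (2, j)"
    and "j < la ! 3 \<Longrightarrow> T (2, j) < T (3, j) \<and> T (3, j) \<le> 4"
    and "i < 4 \<Longrightarrow> j < la ! i \<Longrightarrow> T (i, j) \<le> 4"
proof -
  have cell: "(i, j) \<in> cells la \<longleftrightarrow> j < la ! i" if "i < 4" for i j
    using that length by (simp add: cells_def)
  show "j < la ! 0 \<Longrightarrow> 1 \<le> T (0, j)" using ssyt_range[OF tableau, of 0 j] cell[of 0 j] by simp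
  show "j < la ! 1 \<Longrightarrow> T (0, j) < T (1, j)"
    using ssyt_col[OF tableau, of 0 j] cell[of 1 j] by simp
  show "j < la ! 2 \<Longrightarrow> T (1, j) < T (2, j)"
    using ssyt_col[OF tableau, of 1 j] cell[of 2 j] by (simp add: numeral_2_eq_2)
  show "j < la ! 3 \<Longrightarrow> T (2, j) < T (3, j) \<and> T (3, j) \<le> 4"
    using ssyt_col[OF tableau, of 2 j] cell[of 3 j] ssyt_range[OF tableau, of 3 j]
    by (simp add: numeral_3_eq_3 numeral_2_eq_2)
  show "i < 4 \<Longrightarrow> j < la ! i \<Longrightarrow> T (i, j) \<le> 4" using ssyt_range[OF tableau, of i j] cell by simp
qed

text \<open>A column of height at least 3 contains a 2 or a 4, and one of height 4 contains both.\<close>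

lemma deg_y2_lower_bound: "la ! 2 + la ! 3 \<le> deg_y2 la T"
proof -
  have "(\<Sum>j<la ! 0. (if j < la ! 2 then 1 else 0) + (if j < la ! 3 then 1 else 0 :: nat))
      \<le> (\<Sum>j<la ! 0. \<Sum>i<4. if j < la ! i \<and> (T (i, j) = 2 \<or> T (i, j) = 4) then 1 else 0)"
  proof (rule sum_mono)
    fix j assume "j \<in> {..<la ! 0}"
    then have j: "j < la ! 0" by simp
    consider "j < la ! 3" | "\<not> j < la ! 3" "j < la ! 2" | "\<not> j < la ! 2" by blast
    then show "(if j < la ! 2 then 1 else 0) + (if j < la ! 3 then 1 else 0)
        \<le> (\<Sum>i<4. if j < la ! i \<and> (T (i, j) = 2 \<or> T (i, j) = 4) then 1 else (0::nat))"
    proof cases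
      case 1
      then have "T (1, j) = 2" "T (3, j) = 4" "j < la ! 1" "j < la ! 2"
        using column_entries[of j] j parts_mono by auto
      then show ?thesis unfolding sum_four using 1 by simp
    next
      case 2
      then have "T (1, j) = 2 \<or> T (2, j) = 4" "j < la ! 1"
        using column_entries[of j] column_entries(5)[of 2 j] j parts_mono by auto
      then show ?thesis unfolding sum_four using 2 by auto
    qed (use parts_mono in simp)
  qed
  also have "\<dots> = deg_y2 la T"
    unfolding deg_y2_def by (simp add: content_add_content card_cells_by_columns)
  finally show ?thesis using parts_mono by (simp add: sum.distrib sum_indicator_less)
qed

text \<open>A column of height h contributes at least h - 1 to the sum of both degrees, and 4 if h = 4.\<close>

lemma deg_sum_lower_bound: "la ! 1 + la ! 2 + 2 * la ! 3 \<le> deg_x2 la T + deg_y2 la T"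
proof -
  have "(\<Sum>j<la ! 0. (if j < la ! 1 then 1 else 0) + (if j < la ! 2 then 1 else 0)
          + 2 * (if j < la ! 3 then 1 else 0 :: nat))
      \<le> (\<Sum>j<la ! 0. (\<Sum>i<4. if j < la ! i \<and> (T (i, j) = 3 \<or> T (i, j) = 4) then 1 else 0)
          + (\<Sum>i<4. if j < la ! i \<and> (T (i, j) = 2 \<or> T (i, j) = 4) then 1 else 0))"
  proof (rule sum_mono)
    fix j assume "j \<in> {..<la ! 0}"
    then have j: "j < la ! 0" by simp
    consider "j < la ! 3" | "\<not> j < la ! 3" "j < la ! 2" | "\<not> j < la ! 2" "j < la ! 1"
      | "\<not> j < la ! 1" by blast
    then show "(if j < la ! 1 then 1 else 0) + (if j < la ! 2 then 1 else 0)
          + 2 * (if j < la ! 3 then 1 else 0)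
        \<le> (\<Sum>i<4. if j < la ! i \<and> (T (i, j) = 3 \<or> T (i, j) = 4) then 1 else (0::nat))
          + (\<Sum>i<4. if j < la ! i \<and> (T (i, j) = 2 \<or> T (i, j) = 4) then 1 else (0::nat))"
    proof cases
      case 1
      then have "T (1, j) = 2" "T (2, j) = 3" "T (3, j) = 4" "j < la ! 1" "j < la ! 2"
        using column_entries[of j] j parts_mono by auto
      then show ?thesis unfolding sum_four using 1 by simp
    next
      case 2
      then have "T (1, j) = 2 \<or> T (1, j) = 3" "T (2, j) = 3 \<or> T (2, j) = 4" "j < la ! 1"
        using column_entries[of j] column_entries(5)[of 2 j] j parts_mono by auto
      then show ?thesis unfolding sum_four using 2 by auto
    next
      case 3
      then have "T (1, j) = 2 \<or> T (1, j) = 3 \<or> T (1, j) = 4"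
        using column_entries[of j] column_entries(5)[of 1 j] j parts_mono by auto
      then show ?thesis unfolding sum_four using 3 parts_mono by auto
    qed (use parts_mono in simp)
  qed
  also have "\<dots> = deg_x2 la T + deg_y2 la T"
    unfolding deg_x2_def deg_y2_def by (simp add: content_add_content card_cells_by_columns sum.distrib)
  finally show ?thesis
    using parts_mono by (simp add: sum.distrib sum_indicator_less sum_distrib_left[symmetric])
qed

end

lemma weight_count_eq_0:
  assumes "length la = 4" "is_partition la"
    and "k < la ! 2 + la ! 3 \<or> j + k < la ! 1 + la ! 2 + 2 * la ! 3"
  shows "weight_count la j k = 0"
proof -
  have "{T \<in> ssyt la 4. deg_x2 la T = j \<and> deg_y2 la T = k} = {}"
    using assms deg_y2_lower_bound[OF assms(1,2)] deg_sum_lower_bound[OF assms(1,2)] by fastforce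
  then show ?thesis unfolding weight_count_def by (metis card.empty)
qed

section \<open>Two-row Schur polynomials\<close>

lemma down_closed_eq_lessThan:
  assumes "finite D" "\<And>p q. p \<in> D \<Longrightarrow> q < p \<Longrightarrow> q \<in> D"
  shows "D = {..<card D}"
proof (cases "D = {}")
  case False
  have "D = {..Max D}"
  proof
    show "{..Max D} \<subseteq> D"
      using assms Max_in[OF assms(1) False] by (auto simp: le_less)
  qed (use assms(1) in auto)
  then show ?thesis by (metis card_atMost lessThan_Suc_atMost)
qed simp

lemma cells_two_rows: "(i, j) \<in> cells [a, b] \<longleftrightarrow> (i = 0 \<and> j < a) \<or> (i = 1 \<and> j < b)"
  by (auto simp: cells_def nth_Cons split: nat.splits)

definition two_row_tableau :: "nat \<Rightarrow> nat \<Rightarrow> nat \<Rightarrow> nat \<times> nat \<Rightarrow> nat" where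
  "two_row_tableau a b r = (\<lambda>(i, j).
     if i = 0 \<and> j < a then (if j < a - r then 1 else 2) else if i = 1 \<and> j < b then 2 else 0)"

lemma content_two_rows:
  assumes "\<And>p. p < a \<Longrightarrow> T (0, p) = 2 \<longleftrightarrow> s \<le> p" "\<And>p. p < b \<Longrightarrow> T (1, p) = 2" "s \<le> a"
  shows "content [a, b] T 2 = (a - s) + b"
proof -
  have "{c \<in> cells [a, b]. T c = 2} = (\<lambda>p. (0, p)) ` {s..<a} \<union> (\<lambda>p. (1, p)) ` {..<b}"
    using assms by (auto simp: cells_two_rows)
  moreover have "card ((\<lambda>p. (0::nat, p)) ` {s..<a} \<union> (\<lambda>p. (1::nat, p)) ` {..<b}) = (a - s) + b"
    by (subst card_Un_disjoint) (auto simp: card_image inj_on_def)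
  ultimately show ?thesis unfolding content_def by simp
qed

lemma two_row_tableau_ssyt: "b \<le> a \<Longrightarrow> r \<le> a - b \<Longrightarrow> two_row_tableau a b r \<in> ssyt [a, b] 2"
  unfolding ssyt_def by (auto simp: cells_two_rows two_row_tableau_def)

lemma content_two_row_tableau:
  assumes "b \<le> a" "r \<le> a - b"
  shows "content [a, b] (two_row_tableau a b r) 2 = b + r"
proof -
  have "content [a, b] (two_row_tableau a b r) 2 = (a - (a - r)) + b"
    by (rule content_two_rows) (use assms in \<open>auto simp: two_row_tableau_def\<close>)
  then show ?thesis using assms by simp
qed

lemma ssyt_two_rows_eq:
  assumes ab: "b \<le> a" and T: "T \<in> ssyt [a, b] 2"
  shows "b \<le> content [a, b] T 2 \<and> content [a, b] T 2 \<le> a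
    \<and> T = two_row_tableau a b (content [a, b] T 2 - b)"
proof -
  define s where "s = card {p. p < a \<and> T (0, p) = 1}"
  have row0: "p < a \<Longrightarrow> T (0, p) = 1 \<or> T (0, p) = 2" for p
    using ssyt_range[OF T, of 0 p] by (auto simp: cells_two_rows)
  have row1: "p < b \<Longrightarrow> T (1, p) = 2" for p
    using ssyt_range[OF T, of 1 p] ssyt_range[OF T, of 0 p] ssyt_col[OF T, of 0 p] ab
    by (auto simp: cells_two_rows)
  have "{p. p < a \<and> T (0, p) = 1} = {..<s}" unfolding s_def
  proof (rule down_closed_eq_lessThan)
    fix p q assume p: "p \<in> {p. p < a \<and> T (0, p) = 1}" and "q < p"
    then have "T (0, q) \<le> T (0, p)" using ssyt_row_mono[OF T, of 0 p q] by (auto simp: cells_two_rows)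
    then show "q \<in> {p. p < a \<and> T (0, p) = 1}" using p \<open>q < p\<close> row0[of q] by auto
  qed simp
  then have ones: "p < a \<Longrightarrow> T (0, p) = 1 \<longleftrightarrow> p < s" for p by auto
  have "s \<le> a" unfolding s_def by (rule le_trans[OF card_mono[of "{..<a}"]]) auto
  have "b \<le> s"
  proof (cases b)
    case (Suc b')
    have "T (0, b') < T (1, b')" using ssyt_col[OF T, of 0 b'] Suc by (simp add: cells_two_rows)
    then have "T (0, b') = 1" using row1[of b'] row0[of b'] Suc ab by auto
    then show ?thesis using ones[of b'] Suc ab by simp
  qed simp
  have twos: "p < a \<Longrightarrow> T (0, p) = 2 \<longleftrightarrow> s \<le> p" for p
    using ones[of p] row0[of p] by (cases "p < s") auto
  have "content [a, b] T 2 = (a - s) + b"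
    by (rule content_two_rows) (use twos row1 \<open>s \<le> a\<close> in auto)
  moreover have "T = two_row_tableau a b (a - s)"
  proof (intro ext, clarify)
    fix i j
    show "T (i, j) = two_row_tableau a b (a - s) (i, j)"
    proof (cases "(i, j) \<in> cells [a, b]")
      case False
      then show ?thesis using ssyt_outside[OF T False] by (auto simp: cells_two_rows two_row_tableau_def)
    next
      case True
      then show ?thesis
        using ones[of j] row0[of j] row1[of j] \<open>s \<le> a\<close> by (auto simp: cells_two_rows two_row_tableau_def)
    qed
  qed
  ultimately show ?thesis using \<open>s \<le> a\<close> \<open>b \<le> s\<close> by auto
qed

lemma card_ssyt_two_rows_content:
  assumes "b \<le> a"
  shows "card {T \<in> ssyt [a, b] 2. content [a, b] T 2 = j} = (if b \<le> j \<and> j \<le> a then 1 else 0)"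
proof (cases "b \<le> j \<and> j \<le> a")
  case True
  have "{T \<in> ssyt [a, b] 2. content [a, b] T 2 = j} = {two_row_tableau a b (j - b)}"
    using ssyt_two_rows_eq[OF assms] two_row_tableau_ssyt[OF assms, of "j - b"]
      content_two_row_tableau[OF assms, of "j - b"] True
    by auto
  then show ?thesis using True by simp
next
  case False
  then have "{T \<in> ssyt [a, b] 2. content [a, b] T 2 = j} = {}"
    using ssyt_two_rows_eq[OF assms] by auto
  then show ?thesis using False by (metis card.empty)
qed

lemma sum_group_by_value:
  fixes h :: "'b \<Rightarrow> nat"
  assumes "finite S" "\<And>T. T \<in> S \<Longrightarrow> h T \<le> n"
  shows "(\<Sum>T\<in>S. g (h T)) = (\<Sum>j\<le>n. of_nat (card {T \<in> S. h T = j}) * (g j :: 'a::comm_ring_1))"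
proof -
  have "(\<Sum>T\<in>S. g (h T)) = (\<Sum>j\<le>n. \<Sum>T\<in>{T \<in> S. h T = j}. g (h T))"
    by (rule sum.group[symmetric]) (use assms in auto)
  then show ?thesis by simp
qed

lemma prod_vars2:
  assumes T: "T \<in> ssyt la 2"
  shows "(\<Prod>c\<in>cells la. vars2 x1 x2 (T c)) = x1 ^ (sum_list la - content la T 2) * x2 ^ content la T 2"
proof -
  have cells_eq: "cells la = {c \<in> cells la. T c = 1} \<union> {c \<in> cells la. T c = 2}"
    using ssyt_range[OF T] by fastforce
  have "card (cells la) = card {c \<in> cells la. T c = 1} + content la T 2"
    unfolding content_def by (subst cells_eq, rule card_Un_disjoint) (auto simp: finite_cells)
  then have ones: "card {c \<in> cells la. T c = 1} = sum_list la - content la T 2"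
    by (simp add: card_cells)
  have "(\<Prod>c\<in>cells la. vars2 x1 x2 (T c)) = (\<Prod>c\<in>cells la. if T c = 1 then x1 else x2)"
    by (simp add: vars2_def)
  also have "\<dots> = x1 ^ card (cells la \<inter> {c. T c = 1}) * x2 ^ card (cells la \<inter> - {c. T c = 1})"
    by (simp add: prod.If_cases finite_cells)
  also have "cells la \<inter> - {c. T c = 1} = {c \<in> cells la. T c = 2}"
    using ssyt_range[OF T] by fastforce
  also have "cells la \<inter> {c. T c = 1} = {c \<in> cells la. T c = 1}" by auto
  finally show ?thesis by (simp only: ones content_def)
qed

lemma schur_two_rows:
  assumes "b \<le> a"
  shows "schur [a, b] 2 (vars2 x1 x2)
    = (\<Sum>j\<le>a + b. (if b \<le> j \<and> j \<le> a then 1 else 0) * x1 ^ (a + b - j) * x2 ^ j)"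
proof -
  have "schur [a, b] 2 (vars2 x1 x2)
      = (\<Sum>T\<in>ssyt [a, b] 2. x1 ^ (a + b - content [a, b] T 2) * x2 ^ content [a, b] T 2)"
    unfolding schur_def by (rule sum.cong[OF refl]) (simp add: prod_vars2)
  also have "\<dots> = (\<Sum>j\<le>a + b. of_nat (card {T \<in> ssyt [a, b] 2. content [a, b] T 2 = j})
      * (x1 ^ (a + b - j) * x2 ^ j))"
    by (rule sum_group_by_value[where g = "\<lambda>j. x1 ^ (a + b - j) * x2 ^ j"])
      (use content_le_size[of "[a, b]"] finite_ssyt in auto)
  also have "\<dots> = (\<Sum>j\<le>a + b. (if b \<le> j \<and> j \<le> a then 1 else 0) * x1 ^ (a + b - j) * x2 ^ j)"
    by (rule sum.cong[OF refl]) (simp add: card_ssyt_two_rows_content[OF assms])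
  finally show ?thesis .
qed

lemma sum_swap_pairs:
  "(\<Sum>b\<in>B. \<Sum>d\<in>D. \<Sum>j\<in>J. \<Sum>k\<in>K. f b d j k) = (\<Sum>j\<in>J. \<Sum>k\<in>K. \<Sum>b\<in>B. \<Sum>d\<in>D. f b d j k)"
proof -
  have "(\<Sum>b\<in>B. \<Sum>d\<in>D. \<Sum>j\<in>J. \<Sum>k\<in>K. f b d j k) = (\<Sum>b\<in>B. \<Sum>j\<in>J. \<Sum>d\<in>D. \<Sum>k\<in>K. f b d j k)"
    by (rule sum.cong[OF refl], rule sum.swap)
  also have "\<dots> = (\<Sum>j\<in>J. \<Sum>b\<in>B. \<Sum>d\<in>D. \<Sum>k\<in>K. f b d j k)"
    by (rule sum.swap)
  also have "\<dots> = (\<Sum>j\<in>J. \<Sum>b\<in>B. \<Sum>k\<in>K. \<Sum>d\<in>D. f b d j k)"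
    by (rule sum.cong[OF refl], rule sum.cong[OF refl], rule sum.swap)
  also have "\<dots> = (\<Sum>j\<in>J. \<Sum>k\<in>K. \<Sum>b\<in>B. \<Sum>d\<in>D. f b d j k)"
    by (rule sum.cong[OF refl], rule sum.swap)
  finally show ?thesis .
qed

lemma prod_if_power:
  assumes "finite A"
  shows "(\<Prod>c\<in>A. if P c then u else w)
    = u ^ card {c \<in> A. P c} * (w :: 'a :: comm_monoid_mult) ^ (card A - card {c \<in> A. P c})"
proof -
  have "A \<inter> - {x. P x} = A - {c \<in> A. P c}" by auto
  then have "card (A \<inter> - {x. P x}) = card A - card {c \<in> A. P c}"
    using assms by (simp add: card_Diff_subset)
  moreover have "A \<inter> {x. P x} = {c \<in> A. P c}" by auto
  ultimately show ?thesis using assms by (simp add: prod.If_cases)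
qed

lemma sum_group_by_values2:
  fixes h1 h2 :: "'b \<Rightarrow> nat"
  assumes "finite S" "\<And>T. T \<in> S \<Longrightarrow> h1 T \<le> n" "\<And>T. T \<in> S \<Longrightarrow> h2 T \<le> n"
  shows "(\<Sum>T\<in>S. g (h1 T) (h2 T))
    = (\<Sum>j\<le>n. \<Sum>k\<le>n. of_nat (card {T \<in> S. h1 T = j \<and> h2 T = k}) * (g j k :: 'a :: semiring_1))"
proof -
  have "(\<Sum>T\<in>S. g (h1 T) (h2 T)) = (\<Sum>p\<in>{..n} \<times> {..n}. \<Sum>T\<in>{T \<in> S. (h1 T, h2 T) = p}. g (h1 T) (h2 T))"
    by (rule sum.group[symmetric]) (use assms in auto)
  also have "\<dots> = (\<Sum>p\<in>{..n} \<times> {..n}. of_nat (card {T \<in> S. h1 T = fst p \<and> h2 T = snd p}) * g (fst p) (snd p))"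
  proof (rule sum.cong[OF refl])
    fix p :: "nat \<times> nat"
    obtain j k where p: "p = (j, k)" by force
    have "(\<Sum>T\<in>{T \<in> S. (h1 T, h2 T) = p}. g (h1 T) (h2 T)) = (\<Sum>T\<in>{T \<in> S. h1 T = j \<and> h2 T = k}. g j k)"
      unfolding p by (rule sum.cong) auto
    then show "(\<Sum>T\<in>{T \<in> S. (h1 T, h2 T) = p}. g (h1 T) (h2 T))
        = of_nat (card {T \<in> S. h1 T = fst p \<and> h2 T = snd p}) * g (fst p) (snd p)"
      unfolding p by simp
  qed
  also have "\<dots> = (\<Sum>j\<le>n. \<Sum>k\<le>n. of_nat (card {T \<in> S. h1 T = j \<and> h2 T = k}) * g j k)"
    by (subst sum.cartesian_product) (simp add: split_def)
  finally show ?thesis .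
qed

lemma homogeneous_coeffs_eq:
  fixes A B :: "nat \<Rightarrow> nat \<Rightarrow> real"
  assumes "\<And>x1 x2 y1 y2. (\<Sum>j\<le>n. \<Sum>k\<le>n. A j k * (x1 ^ (n - j) * x2 ^ j) * (y1 ^ (n - k) * y2 ^ k))
    = (\<Sum>j\<le>n. \<Sum>k\<le>n. B j k * (x1 ^ (n - j) * x2 ^ j) * (y1 ^ (n - k) * y2 ^ k))"
    and "j \<le> n" "k \<le> n"
  shows "A j k = B j k"
proof -
  have dehomogenize: "(\<Sum>j\<le>n. \<Sum>k\<le>n. C j k * (1 ^ (n - j) * x ^ j) * (1 ^ (n - k) * y ^ k))
      = (\<Sum>k\<le>n. (\<Sum>j\<le>n. C j k * x ^ j) * y ^ k)" for C :: "nat \<Rightarrow> nat \<Rightarrow> real" and x y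
    by (subst sum.swap) (simp add: sum_distrib_left mult_ac)
  have "\<forall>y. (\<Sum>k\<le>n. (\<Sum>j\<le>n. A j k * x ^ j) * y ^ k) = (\<Sum>k\<le>n. (\<Sum>j\<le>n. B j k * x ^ j) * y ^ k)" for x
    using assms(1)[of 1 x 1] dehomogenize by simp
  then have "\<forall>x. (\<Sum>j\<le>n. A j k * x ^ j) = (\<Sum>j\<le>n. B j k * x ^ j)"
    using assms(3) by (simp add: polyfun_eq_coeffs)
  then show ?thesis using assms(2) by (simp add: polyfun_eq_coeffs)
qed

text \<open>The coefficient of x1^(n - j) x2^j in the Schur polynomial s_(n - b, b)(x1, x2).\<close>

definition two_row_coeff :: "nat \<Rightarrow> nat \<Rightarrow> nat \<Rightarrow> int" where
  "two_row_coeff n b j = (if b \<le> j \<and> j \<le> n - b then 1 else 0)"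

text \<open>The coefficient of x1^(n - j) x2^j y1^(n - k) y2^k in
  the sum of e b d * s_(n - b, b)(x1, x2) * s_(n - d, d)(y1, y2) over b, d \<le> n div 2.\<close>

definition schur_product_coeff :: "nat \<Rightarrow> (nat \<Rightarrow> nat \<Rightarrow> int) \<Rightarrow> nat \<Rightarrow> nat \<Rightarrow> int" where
  "schur_product_coeff n e j k
     = (\<Sum>b\<le>n div 2. \<Sum>d\<le>n div 2. e b d * two_row_coeff n b j * two_row_coeff n d k)"

lemma schur_product_coeff_diff:
  "schur_product_coeff n (\<lambda>b d. e1 b d - e2 b d) j k
     = schur_product_coeff n e1 j k - schur_product_coeff n e2 j k"
  by (simp add: schur_product_coeff_def sum_subtractf left_diff_distrib)

lemma schur_product_coeff_cong:
  "(\<And>b d. b \<le> n div 2 \<Longrightarrow> d \<le> n div 2 \<Longrightarrow> e1 b d = e2 b d)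
     \<Longrightarrow> schur_product_coeff n e1 j k = schur_product_coeff n e2 j k"
  by (simp add: schur_product_coeff_def)

lemma schur_product_coeff_le_half:
  assumes "j \<le> n div 2" "k \<le> n div 2"
  shows "schur_product_coeff n e j k
    = (\<Sum>b\<le>n div 2. \<Sum>d\<le>n div 2. if b \<le> j \<and> d \<le> k then e b d else 0)"
proof -
  have "two_row_coeff n b j = (if b \<le> j then 1 else 0)"
    "two_row_coeff n d k = (if d \<le> k then 1 else 0)" for b d
    using assms by (auto simp: two_row_coeff_def)
  then show ?thesis unfolding schur_product_coeff_def by (intro sum.cong refl) auto
qed

text \<open>Triangularity: the coefficients at (j, k) with j, k \<le> n div 2 determine e.\<close>

lemma eq_0_if_schur_product_coeff_eq_0:
  assumes "\<And>j k. j \<le> n div 2 \<Longrightarrow> k \<le> n div 2 \<Longrightarrow> schur_product_coeff n e j k = 0"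
  shows "b \<le> n div 2 \<Longrightarrow> d \<le> n div 2 \<Longrightarrow> e b d = 0"
proof (induction "b + d" arbitrary: b d rule: less_induct)
  case less
  have "schur_product_coeff n e b d
      = (\<Sum>b'\<le>n div 2. \<Sum>d'\<le>n div 2. if b' = b \<and> d' = d then e b d else 0)"
    unfolding schur_product_coeff_le_half[OF less.prems]
  proof (intro sum.cong refl)
    fix b' d' assume "b' \<in> {..n div 2}" "d' \<in> {..n div 2}"
    then show "(if b' \<le> b \<and> d' \<le> d then e b' d' else 0) = (if b' = b \<and> d' = d then e b d else 0)"
      using less.hyps[of b' d'] less.prems by auto
  qed
  also have "\<dots> = (\<Sum>b'\<le>n div 2. if b' = b then (\<Sum>d'\<le>n div 2. if d' = d then e b d else 0) else 0)"
    by (intro sum.cong refl) auto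
  also have "\<dots> = e b d"
    using less.prems by simp
  finally show ?case using assms less.prems by simp
qed

definition backward_diff :: "(nat \<Rightarrow> int) \<Rightarrow> nat \<Rightarrow> int" where
  "backward_diff f x = f x - (if x = 0 then 0 else f (x - 1))"

lemma sum_backward_diff: "(\<Sum>x\<le>n. backward_diff f x) = f n"
  by (induction n) (auto simp: backward_diff_def)

definition mixed_diff :: "(nat \<Rightarrow> nat \<Rightarrow> int) \<Rightarrow> nat \<Rightarrow> nat \<Rightarrow> int" where
  "mixed_diff g b d = backward_diff (\<lambda>b. backward_diff (g b) d) b"

lemma mixed_diff_eq_0:
  "(\<And>b' d'. b' \<le> b \<Longrightarrow> d' \<le> d \<Longrightarrow> g b' d' = 0) \<Longrightarrow> mixed_diff g b d = 0"
  by (simp add: mixed_diff_def backward_diff_def)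

lemma sum_atMost_if_le: "J \<le> (M::nat) \<Longrightarrow> (\<Sum>b\<le>M. if b \<le> J then f b else 0) = (\<Sum>b\<le>J. f b)"
  by (simp add: sum.inter_filter[symmetric] Collect_conj_eq[symmetric] atMost_def) (metis le_trans)

lemma schur_product_coeff_mixed_diff:
  assumes "j \<le> n" "k \<le> n"
  shows "schur_product_coeff n (mixed_diff g) j k = g (min j (n - j)) (min k (n - k))"
proof -
  let ?J = "min j (n - j)" and ?K = "min k (n - k)"
  have coeffs: "two_row_coeff n b j = (if b \<le> ?J then 1 else 0)"
    "two_row_coeff n d k = (if d \<le> ?K then 1 else 0)" for b d
    using assms by (auto simp: two_row_coeff_def)
  have "schur_product_coeff n (mixed_diff g) j k
      = (\<Sum>b\<le>n div 2. if b \<le> ?J then (\<Sum>d\<le>n div 2. if d \<le> ?K then mixed_diff g b d else 0) else 0)"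
    unfolding schur_product_coeff_def
  proof (intro sum.cong refl)
    fix b
    show "(\<Sum>d\<le>n div 2. mixed_diff g b d * two_row_coeff n b j * two_row_coeff n d k)
      = (if b \<le> ?J then (\<Sum>d\<le>n div 2. if d \<le> ?K then mixed_diff g b d else 0) else 0)"
      by (cases "b \<le> ?J") (auto simp: coeffs intro: sum.cong)
  qed
  also have "\<dots> = (\<Sum>b\<le>?J. \<Sum>d\<le>?K. mixed_diff g b d)"
  proof -
    have "?J \<le> n div 2" "?K \<le> n div 2" by auto
    then show ?thesis by (simp only: sum_atMost_if_le)
  qed
  also have "\<dots> = (\<Sum>d\<le>?K. \<Sum>b\<le>?J. backward_diff (\<lambda>b. backward_diff (g b) d) b)"
    unfolding mixed_diff_def by (rule sum.swap)
  also have "\<dots> = g ?J ?K"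
    by (simp add: sum_backward_diff)
  finally show ?thesis .
qed

section \<open>Kronecker coefficients of two-row shapes\<close>

lemma two_row_parts_eq: "two_row_parts n = (\<lambda>b. [n - b, b]) ` {..n div 2}"
  unfolding two_row_parts_def by (auto intro!: image_eqI)

lemma two_row_parts_memI:
  assumes "length mu = 2" "is_partition mu" "sum_list mu = n"
  shows "mu \<in> two_row_parts n"
proof -
  obtain a b where "mu = [a, b]"
    using assms(1) by (metis length_0_conv length_Suc_conv numeral_2_eq_2)
  then show ?thesis using assms(2,3) by (auto simp: two_row_parts_def is_partition_def)
qed

lemma schur_two_row_parts:
  assumes "b \<le> n div 2"
  shows "schur [n - b, b] 2 (vars2 x1 x2) = (\<Sum>j\<le>n. of_int (two_row_coeff n b j) * (x1 ^ (n - j) * x2 ^ j))"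
proof -
  have "b \<le> n - b" "n - b + b = n" using assms by linarith+
  then show ?thesis
    by (auto simp: schur_two_rows two_row_coeff_def mult.assoc intro!: sum.cong)
qed

lemma kron_sum_eq:
  fixes c :: "nat list \<Rightarrow> nat list \<Rightarrow> int"
  shows "(\<Sum>mu\<in>two_row_parts n. \<Sum>nu\<in>two_row_parts n.
      of_int (c mu nu) * schur mu 2 (vars2 x1 x2) * schur nu 2 (vars2 y1 y2))
    = (\<Sum>j\<le>n. \<Sum>k\<le>n. of_int (schur_product_coeff n (\<lambda>b d. c [n - b, b] [n - d, d]) j k)
        * (x1 ^ (n - j) * x2 ^ j) * (y1 ^ (n - k) * y2 ^ k))"
proof -
  let ?X = "\<lambda>j. x1 ^ (n - j) * x2 ^ j" and ?Y = "\<lambda>k. y1 ^ (n - k) * y2 ^ k"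
  let ?E = "\<lambda>b j. real_of_int (two_row_coeff n b j)"
  have "inj_on (\<lambda>b. [n - b, b]) {..n div 2}" by (auto simp: inj_on_def)
  then have "(\<Sum>mu\<in>two_row_parts n. \<Sum>nu\<in>two_row_parts n.
      of_int (c mu nu) * schur mu 2 (vars2 x1 x2) * schur nu 2 (vars2 y1 y2))
    = (\<Sum>b\<le>n div 2. \<Sum>d\<le>n div 2. of_int (c [n - b, b] [n - d, d])
        * (\<Sum>j\<le>n. ?E b j * ?X j) * (\<Sum>k\<le>n. ?E d k * ?Y k))"
    unfolding two_row_parts_eq by (simp add: sum.reindex schur_two_row_parts)
  also have "\<dots> = (\<Sum>b\<le>n div 2. \<Sum>d\<le>n div 2. \<Sum>j\<le>n. \<Sum>k\<le>n.
      of_int (c [n - b, b] [n - d, d]) * ?E b j * ?E d k * ?X j * ?Y k)"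
    by (simp add: sum_distrib_left sum_distrib_right mult_ac)
  also have "\<dots> = (\<Sum>j\<le>n. \<Sum>k\<le>n. \<Sum>b\<le>n div 2. \<Sum>d\<le>n div 2.
      of_int (c [n - b, b] [n - d, d]) * ?E b j * ?E d k * ?X j * ?Y k)"
    by (rule sum_swap_pairs)
  also have "\<dots> = (\<Sum>j\<le>n. \<Sum>k\<le>n. of_int (schur_product_coeff n (\<lambda>b d. c [n - b, b] [n - d, d]) j k)
      * ?X j * ?Y k)"
    unfolding schur_product_coeff_def by (simp add: sum_distrib_right)
  finally show ?thesis .
qed

text \<open>The Kronecker coefficients are the mixed second differences of the weight counts; the
  symmetries of the weight counts are what make this a valid expansion.\<close>

definition kron_coeffs :: "nat list \<Rightarrow> nat list \<Rightarrow> nat list \<Rightarrow> int" where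
  "kron_coeffs la mu nu = (if mu \<in> two_row_parts (sum_list la) \<and> nu \<in> two_row_parts (sum_list la)
     then mixed_diff (\<lambda>b d. int (weight_count la b d)) (mu ! 1) (nu ! 1) else 0)"

context
  fixes la :: "nat list"
  assumes length: "length la = 4" and partition: "is_partition la"
begin

lemma prod_vars4:
  assumes T: "T \<in> ssyt la 4"
  shows "(\<Prod>c\<in>cells la. vars4 (x1 * y1) (x1 * y2) (x2 * y1) (x2 * y2) (T c))
    = (x1 ^ (sum_list la - deg_x2 la T) * x2 ^ deg_x2 la T) * (y1 ^ (sum_list la - deg_y2 la T) * y2 ^ deg_y2 la T)"
proof -
  have "vars4 (x1 * y1) (x1 * y2) (x2 * y1) (x2 * y2) (T c)
      = (if T c = 3 \<or> T c = 4 then x2 else x1) * (if T c = 2 \<or> T c = 4 then y2 else y1)" if "c \<in> cells la" for c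
  proof -
    have "T c \<in> {1, 2, 3, 4}" using ssyt_range[OF T, of "fst c" "snd c"] that by auto
    then show ?thesis by (auto simp: vars4_def)
  qed
  then have "(\<Prod>c\<in>cells la. vars4 (x1 * y1) (x1 * y2) (x2 * y1) (x2 * y2) (T c))
      = (\<Prod>c\<in>cells la. (if T c = 3 \<or> T c = 4 then x2 else x1) * (if T c = 2 \<or> T c = 4 then y2 else y1))"
    by (rule prod.cong[OF refl])
  also have "\<dots> = x2 ^ deg_x2 la T * x1 ^ (sum_list la - deg_x2 la T) * (y2 ^ deg_y2 la T * y1 ^ (sum_list la - deg_y2 la T))"
    by (simp add: prod.distrib prod_if_power finite_cells card_cells deg_x2_def deg_y2_def content_add_content)
  finally show ?thesis by (simp add: mult_ac)
qed

lemma schur_vars4_eq: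
  "schur la 4 (vars4 (x1 * y1) (x1 * y2) (x2 * y1) (x2 * y2))
    = (\<Sum>j\<le>sum_list la. \<Sum>k\<le>sum_list la. of_nat (weight_count la j k)
        * (x1 ^ (sum_list la - j) * x2 ^ j) * (y1 ^ (sum_list la - k) * y2 ^ k))"
proof -
  let ?n = "sum_list la"
  have "schur la 4 (vars4 (x1 * y1) (x1 * y2) (x2 * y1) (x2 * y2))
      = (\<Sum>T\<in>ssyt la 4. (\<lambda>j k. (x1 ^ (?n - j) * x2 ^ j) * (y1 ^ (?n - k) * y2 ^ k)) (deg_x2 la T) (deg_y2 la T))"
    unfolding schur_def by (rule sum.cong[OF refl]) (simp add: prod_vars4)
  also have "\<dots> = (\<Sum>j\<le>?n. \<Sum>k\<le>?n. of_nat (weight_count la j k) * ((x1 ^ (?n - j) * x2 ^ j) * (y1 ^ (?n - k) * y2 ^ k)))"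
    unfolding weight_count_def by (rule sum_group_by_values2) (auto simp: finite_ssyt deg_x2_le deg_y2_le)
  finally show ?thesis by (simp add: mult.assoc)
qed

lemma kron_expansion_coeff:
  assumes "kron_expansion la c" "j \<le> sum_list la" "k \<le> sum_list la"
  shows "schur_product_coeff (sum_list la) (\<lambda>b d. c [sum_list la - b, b] [sum_list la - d, d]) j k
    = int (weight_count la j k)"
proof -
  let ?n = "sum_list la"
  have "real (weight_count la j k)
      = real_of_int (schur_product_coeff ?n (\<lambda>b d. c [?n - b, b] [?n - d, d]) j k)"
  proof (rule homogeneous_coeffs_eq[where n = ?n])
    show "(\<Sum>j\<le>?n. \<Sum>k\<le>?n. real (weight_count la j k) * (x1 ^ (?n - j) * x2 ^ j) * (y1 ^ (?n - k) * y2 ^ k))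
      = (\<Sum>j\<le>?n. \<Sum>k\<le>?n. real_of_int (schur_product_coeff ?n (\<lambda>b d. c [?n - b, b] [?n - d, d]) j k)
          * (x1 ^ (?n - j) * x2 ^ j) * (y1 ^ (?n - k) * y2 ^ k))" for x1 x2 y1 y2
      using assms(1) unfolding kron_expansion_def
      by (simp only: schur_vars4_eq[symmetric] kron_sum_eq[symmetric])
  qed (use assms(2,3) in auto)
  then show ?thesis by linarith
qed

lemma weight_count_fold:
  assumes "j \<le> sum_list la" "k \<le> sum_list la"
  shows "weight_count la (min j (sum_list la - j)) (min k (sum_list la - k)) = weight_count la j k"
proof -
  have "weight_count la (min j (sum_list la - j)) k' = weight_count la j k'" for k'
    by (cases "j \<le> sum_list la - j") (auto simp: min_def weight_count_reflect_x2[OF partition assms(1)])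
  moreover have "weight_count la j' (min k (sum_list la - k)) = weight_count la j' k" for j'
    by (cases "k \<le> sum_list la - k") (auto simp: min_def weight_count_reflect_y2[OF partition assms(2)])
  ultimately show ?thesis by simp
qed

lemma kron_expansion_kron_coeffs: "kron_expansion la (kron_coeffs la)"
proof -
  let ?n = "sum_list la"
  have coeff: "schur_product_coeff ?n (\<lambda>b d. kron_coeffs la [?n - b, b] [?n - d, d]) j k
      = int (weight_count la j k)" if "j \<le> ?n" "k \<le> ?n" for j k
  proof -
    have "schur_product_coeff ?n (\<lambda>b d. kron_coeffs la [?n - b, b] [?n - d, d]) j k
        = schur_product_coeff ?n (mixed_diff (\<lambda>b d. int (weight_count la b d))) j k"
      by (rule schur_product_coeff_cong) (auto simp: kron_coeffs_def two_row_parts_eq)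
    then show ?thesis
      using schur_product_coeff_mixed_diff[OF that] weight_count_fold[OF that] by simp
  qed
  have "schur la 4 (vars4 (x1 * y1) (x1 * y2) (x2 * y1) (x2 * y2))
      = (\<Sum>mu\<in>two_row_parts ?n. \<Sum>nu\<in>two_row_parts ?n.
          of_int (kron_coeffs la mu nu) * schur mu 2 (vars2 x1 x2) * schur nu 2 (vars2 y1 y2))" for x1 x2 y1 y2
    unfolding schur_vars4_eq kron_sum_eq by (intro sum.cong refl) (simp add: coeff)
  moreover have "mu \<notin> two_row_parts ?n \<or> nu \<notin> two_row_parts ?n \<Longrightarrow> kron_coeffs la mu nu = 0" for mu nu
    by (auto simp: kron_coeffs_def)
  ultimately show ?thesis unfolding kron_expansion_def by blast
qed

lemma kron_expansion_unique:
  assumes "kron_expansion la c1" "kron_expansion la c2"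
  shows "c1 = c2"
proof (intro ext)
  let ?n = "sum_list la"
  fix mu nu
  show "c1 mu nu = c2 mu nu"
  proof (cases "mu \<in> two_row_parts ?n \<and> nu \<in> two_row_parts ?n")
    case True
    then obtain b d where bd: "b \<le> ?n div 2" "d \<le> ?n div 2" "mu = [?n - b, b]" "nu = [?n - d, d]"
      unfolding two_row_parts_eq by auto
    let ?e = "\<lambda>b d. c1 [?n - b, b] [?n - d, d] - c2 [?n - b, b] [?n - d, d]"
    have "?e b d = 0"
    proof (rule eq_0_if_schur_product_coeff_eq_0[OF _ bd(1,2)])
      fix j k assume "j \<le> ?n div 2" "k \<le> ?n div 2"
      then show "schur_product_coeff ?n ?e j k = 0"
        by (simp add: schur_product_coeff_diff kron_expansion_coeff[OF assms(1)]
            kron_expansion_coeff[OF assms(2)])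
    qed
    then show ?thesis using bd by simp
  next
    case False
    then show ?thesis using assms unfolding kron_expansion_def by auto
  qed
qed

lemma kronecker_eq_kron_coeffs: "kronecker mu nu la = kron_coeffs la mu nu"
proof -
  have "(THE c. kron_expansion la c) = kron_coeffs la"
  proof (rule the_equality)
    fix c assume "kron_expansion la c"
    then show "c = kron_coeffs la" using kron_expansion_kron_coeffs by (rule kron_expansion_unique)
  qed (rule kron_expansion_kron_coeffs)
  then show ?thesis unfolding kronecker_def by simp
qed

end

theorem proposition3p6:
  fixes la mu nu :: "nat list"
  assumes "length la = 4" and "length mu = 2" and "length nu = 2"
    and "is_partition la" and "is_partition mu" and "is_partition nu"
    and "sum_list mu = sum_list la" and "sum_list nu = sum_list la"
    and "nu ! 1 < la ! 2 + la ! 3 \<or> mu ! 1 + nu ! 1 < la ! 1 + la ! 2 + 2 * la ! 3"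
  shows "kronecker mu nu la = 0"
proof -
  have "mu \<in> two_row_parts (sum_list la)" "nu \<in> two_row_parts (sum_list la)"
    using two_row_parts_memI assms(2,3,5-8) by auto
  then have "kronecker mu nu la = mixed_diff (\<lambda>b d. int (weight_count la b d)) (mu ! 1) (nu ! 1)"
    unfolding kronecker_eq_kron_coeffs[OF assms(1,4)] kron_coeffs_def by simp
  also have "\<dots> = 0"
  proof (rule mixed_diff_eq_0)
    fix b d assume "b \<le> mu ! 1" "d \<le> nu ! 1"
    then have "d < la ! 2 + la ! 3 \<or> b + d < la ! 1 + la ! 2 + 2 * la ! 3" using assms(9) by linarith
    then show "int (weight_count la b d) = 0" using weight_count_eq_0[OF assms(1,4)] by simp
  qed
  finally show ?thesis .
qed

end
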